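(* Let $f(t)$ be a solution of the kinetic Kuramoto model for non-identical oscillators with coupling $K>0$ and initial datum $f_0$ with $\int\omega^2 g(\omega)d\omega<\infty$. Then the functional $$\mathcal H_f(t)=\int_{[-\pi,\pi)\times\mathbb R}\Theta(t,\vartheta,\omega)\,\omega\,f_0(\vartheta,\omega)\,d\vartheta\,d\omega+K\frac{R(t)^2}{2}$$ is non-decreasing in $t$.
   Context: Kinetic Kuramoto model for non-identical oscillators: $f(t)$ is a probability measure on $\mathcal T\times\mathbb R$, $\mathcal T=\mathbb R/2\pi\mathbb Z$, given via characteristics $\dot\Theta(t,\vartheta,\omega)=\omega-KR(t)\sin(\Theta(t,\vartheta,\omega)-\varphi(t))$, $\Theta(0,\vartheta,\omega)=\vartheta$ (real-valued, with $\vartheta\in[-\pi,\pi)$), $R(t)e^{\mathrm{i}\varphi(t)}=\int e^{\mathrm{i}\vartheta}f(t,\vartheta,\omega)d\vartheta d\omega$, and $f(t)$ is the push-forward of $f_0$ by $(\vartheta,\omega)\mapsto(\Theta(t,\vartheta,\omega),\omega)$. $g$ is the $\omega$-marginal of $f_0$. *)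

theory Defs
  imports "HOL-Probability.Probability"
begin

text \<open>The initial datum f0 is a probability measure M on pairs (vartheta, omega) in R x R
  (Borel sets), concentrated on [-pi,pi) x R.  The characteristics are
  Theta :: time => vartheta => omega => real.\<close>

definition order_parameter ::
  "(real \<times> real) measure \<Rightarrow> (real \<Rightarrow> real \<Rightarrow> real \<Rightarrow> real) \<Rightarrow> real \<Rightarrow> complex" where
  "order_parameter M \<Theta> t = (\<integral>x. cis (\<Theta> t (fst x) (snd x)) \<partial>M)"

definition kuramoto_solution ::
  "real \<Rightarrow> (real \<times> real) measure \<Rightarrow> (real \<Rightarrow> real \<Rightarrow> real \<Rightarrow> real)
     \<Rightarrow> (real \<Rightarrow> real) \<Rightarrow> (real \<Rightarrow> real) \<Rightarrow> bool" where
  "kuramoto_solution K M \<Theta> R \<phi> \<longleftrightarrow>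
     (\<forall>\<theta>0 \<omega>. \<Theta> 0 \<theta>0 \<omega> = \<theta>0) \<and>
     (\<forall>\<theta>0 \<omega> t. t \<ge> 0 \<longrightarrow>
        ((\<lambda>s. \<Theta> s \<theta>0 \<omega>) has_real_derivative
            (\<omega> - K * R t * sin (\<Theta> t \<theta>0 \<omega> - \<phi> t))) (at t within {0..})) \<and>
     (\<forall>t\<ge>0. (\<lambda>x. \<Theta> t (fst x) (snd x)) \<in> borel_measurable M) \<and>
     (\<forall>t\<ge>0. R t \<ge> 0 \<and> complex_of_real (R t) * cis (\<phi> t) = order_parameter M \<Theta> t)"

definition kuramoto_H ::
  "real \<Rightarrow> (real \<times> real) measure \<Rightarrow> (real \<Rightarrow> real \<Rightarrow> real \<Rightarrow> real)
     \<Rightarrow> (real \<Rightarrow> real) \<Rightarrow> real \<Rightarrow> real" where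
  "kuramoto_H K M \<Theta> R t =
     (\<integral>x. \<Theta> t (fst x) (snd x) * snd x \<partial>M) + K * (R t)\<^sup>2 / 2"

end

theory Submission
  imports Defs
begin

text \<open>
  Write v = \<omega> - K R sin(\<Theta> - \<phi>) for the velocity of a characteristic
  and C + i S = R e^(i \<phi>) = \<integral> e^(i \<Theta>) d f0 for the order parameter.  Differentiating
  under the integral sign gives
    H' = \<integral> \<omega> v + K (C C' + S S'),   C' = - \<integral> sin \<Theta> v,   S' = \<integral> cos \<Theta> v,
  and since C = R cos \<phi>, S = R sin \<phi>, the coupling term equals - K R \<integral> sin(\<Theta> - \<phi>) v.
  Hence H' = \<integral> v^2 \<ge> 0, a dissipation identity.
\<close>

lemma has_real_derivative_integral:
  fixes F :: "real \<Rightarrow> 'a \<Rightarrow> real"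
  assumes t: "t \<in> S"
    and int: "\<And>s. s \<in> S \<Longrightarrow> integrable M (F s)"
    and der: "\<And>x. x \<in> space M \<Longrightarrow> ((\<lambda>s. F s x) has_real_derivative F' x) (at t within S)"
    and bnd: "\<And>s x. s \<in> S \<Longrightarrow> x \<in> space M \<Longrightarrow> \<bar>F s x - F t x\<bar> \<le> \<bar>s - t\<bar> * B x"
    and intB: "integrable M B"
    and mF': "F' \<in> borel_measurable M"
  shows "((\<lambda>s. \<integral>x. F s x \<partial>M) has_real_derivative (\<integral>x. F' x \<partial>M)) (at t within S)"
proof -
  have "((\<lambda>s. ((\<integral>x. F s x \<partial>M) - (\<integral>x. F t x \<partial>M)) / (s - t)) \<longlongrightarrow> (\<integral>x. F' x \<partial>M)) (at t within S)"
  proof (rule Lim_within_LIMSEQ, intro allI impI)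
    fix X assume X: "(\<forall>n. X n \<noteq> t \<and> X n \<in> S) \<and> X \<longlonglongrightarrow> t"
    have quotient_eq: "((\<integral>x. F (X n) x \<partial>M) - (\<integral>x. F t x \<partial>M)) / (X n - t)
        = (\<integral>x. (F (X n) x - F t x) / (X n - t) \<partial>M)" for n
      using X int[of "X n"] int[OF t] by simp
    have "(\<lambda>n. \<integral>x. (F (X n) x - F t x) / (X n - t) \<partial>M) \<longlonglongrightarrow> (\<integral>x. F' x \<partial>M)"
    proof (rule integral_dominated_convergence[where w=B])
      show "(\<lambda>x. (F (X n) x - F t x) / (X n - t)) \<in> borel_measurable M" for n
        using int X t by auto
      show "AE x in M. (\<lambda>n. (F (X n) x - F t x) / (X n - t)) \<longlonglongrightarrow> F' x"
      proof (rule AE_I2)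
        fix x assume x: "x \<in> space M"
        from der[OF x] have "((\<lambda>s. (F s x - F t x) / (s - t)) \<longlongrightarrow> F' x) (at t within S)"
          by (simp add: has_field_derivative_iff)
        then show "(\<lambda>n. (F (X n) x - F t x) / (X n - t)) \<longlonglongrightarrow> F' x"
          using X unfolding tendsto_at_iff_sequentially comp_def by auto
      qed
      show "AE x in M. norm ((F (X n) x - F t x) / (X n - t)) \<le> B x" for n
      proof (rule AE_I2)
        fix x assume x: "x \<in> space M"
        have "\<bar>F (X n) x - F t x\<bar> \<le> \<bar>X n - t\<bar> * B x" using bnd X x by auto
        moreover have "\<bar>X n - t\<bar> > 0" using X by auto
        ultimately show "norm ((F (X n) x - F t x) / (X n - t)) \<le> B x"
          by (simp add: abs_divide pos_divide_le_eq mult.commute)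
      qed
    qed fact+
    then show "(\<lambda>n. ((\<integral>x. F (X n) x \<partial>M) - (\<integral>x. F t x \<partial>M)) / (X n - t)) \<longlonglongrightarrow> (\<integral>x. F' x \<partial>M)"
      by (simp only: quotient_eq)
  qed
  then show ?thesis by (simp add: has_field_derivative_iff)
qed

lemma mono_on_atLeast_if_derivative_nonneg:
  fixes G G' :: "real \<Rightarrow> real"
  assumes der: "\<And>t. a \<le> t \<Longrightarrow> (G has_real_derivative G' t) (at t within {a..})"
    and nonneg: "\<And>t. a \<le> t \<Longrightarrow> 0 \<le> G' t"
  shows "mono_on {a..} G"
proof (rule mono_onI)
  have cont: "continuous_on {a..} G"
    unfolding continuous_on_eq_continuous_within using der by (auto intro: DERIV_continuous)
  fix s t assume st: "s \<in> {a..}" "t \<in> {a..}" "s \<le> t"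
  show "G s \<le> G t"
  proof (rule DERIV_nonneg_imp_increasing_open[OF st(3)])
    fix u assume u: "s < u" "u < t"
    then have "u \<in> interior {a..}" using st by auto
    then show "\<exists>y. DERIV G u :> y \<and> 0 \<le> y"
      using der[of u] nonneg[of u] u st at_within_interior by fastforce
  next
    show "continuous_on {s..t} G" using st by (intro continuous_on_subset[OF cont]) auto
  qed
qed

lemma abs_sin_diff_le: "\<bar>sin (a::real) - sin b\<bar> \<le> \<bar>a - b\<bar>"
proof -
  have "norm (sin a - sin b) \<le> 1 * norm (a - b)"
    by (rule field_differentiable_bound[where S=UNIV and f'="\<lambda>z. cos z"])
       (auto intro!: derivative_eq_intros)
  then show ?thesis by simp
qed

lemma abs_cos_diff_le: "\<bar>cos (a::real) - cos b\<bar> \<le> \<bar>a - b\<bar>"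
proof -
  have "norm (cos a - cos b) \<le> 1 * norm (a - b)"
    by (rule field_differentiable_bound[where S=UNIV and f'="\<lambda>z. - sin z"])
       (auto intro!: derivative_eq_intros)
  then show ?thesis by simp
qed

locale kinetic_kuramoto = prob_space M
  for M :: "(real \<times> real) measure" +
  fixes K :: real and \<Theta> :: "real \<Rightarrow> real \<Rightarrow> real \<Rightarrow> real" and R \<phi> :: "real \<Rightarrow> real"
  assumes sets_M: "sets M = sets borel"
    and initial_support: "AE x in M. fst x \<in> {-pi..<pi}"
    and K_pos: "K > 0"
    and second_moment: "integrable M (\<lambda>x. (snd x)\<^sup>2)"
    and solution: "kuramoto_solution K M \<Theta> R \<phi>"
begin

definition phase :: "real \<Rightarrow> real \<times> real \<Rightarrow> real" where
  "phase t x = \<Theta> t (fst x) (snd x)"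

definition velocity :: "real \<Rightarrow> real \<times> real \<Rightarrow> real" where
  "velocity t x = snd x - K * R t * sin (phase t x - \<phi> t)"

lemma phase_initial: "phase 0 x = fst x"
  using solution by (simp add: kuramoto_solution_def phase_def)

lemma phase_has_derivative:
  "t \<ge> 0 \<Longrightarrow> ((\<lambda>s. phase s x) has_real_derivative velocity t x) (at t within {0..})"
  using solution by (simp add: kuramoto_solution_def phase_def velocity_def)

lemma phase_measurable [measurable]: "t \<ge> 0 \<Longrightarrow> phase t \<in> borel_measurable M"
  using solution unfolding kuramoto_solution_def phase_def[abs_def] by simp

lemma order_parameter_polar:
  assumes "t \<ge> 0"
  shows "R t \<ge> 0" and "complex_of_real (R t) * cis (\<phi> t) = (\<integral>x. cis (phase t x) \<partial>M)"
  using solution assms by (auto simp: kuramoto_solution_def order_parameter_def phase_def)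

lemma frequency_measurable [measurable]: "snd \<in> borel_measurable M"
proof -
  have "snd \<in> borel_measurable (borel :: (real \<times> real) measure)"
    by (intro borel_measurable_continuous_onI continuous_intros)
  then show ?thesis unfolding measurable_cong_sets[OF sets_M refl] .
qed

lemma integrable_abs_frequency: "integrable M (\<lambda>x. \<bar>snd x\<bar>)"
  using square_integrable_imp_integrable[OF frequency_measurable second_moment] by simp

text \<open>The order parameter is an average of unit vectors, so R \<le> 1.\<close>

lemma order_parameter_le_1:
  assumes "t \<ge> 0" shows "R t \<le> 1"
proof -
  have "R t = norm (complex_of_real (R t) * cis (\<phi> t))"
    using order_parameter_polar(1)[OF assms] by (simp add: norm_mult)
  also have "\<dots> = norm (\<integral>x. cis (phase t x) \<partial>M)"
    by (simp only: order_parameter_polar(2)[OF assms])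
  also have "\<dots> \<le> (\<integral>x. norm (cis (phase t x)) \<partial>M)" by (rule integral_norm_bound)
  also have "\<dots> = 1" by (simp add: prob_space)
  finally show ?thesis .
qed

lemma velocity_bound:
  assumes "t \<ge> 0" shows "\<bar>velocity t x\<bar> \<le> \<bar>snd x\<bar> + K"
proof -
  have "\<bar>K * R t * sin (phase t x - \<phi> t)\<bar> = K * R t * \<bar>sin (phase t x - \<phi> t)\<bar>"
    using K_pos order_parameter_polar(1)[OF assms] by (simp add: abs_mult)
  also have "\<dots> \<le> K * 1 * 1"
    using K_pos order_parameter_polar(1)[OF assms] order_parameter_le_1[OF assms]
    by (intro mult_mono) auto
  finally show ?thesis unfolding velocity_def by linarith
qed

lemma velocity_measurable [measurable]: "t \<ge> 0 \<Longrightarrow> velocity t \<in> borel_measurable M"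
  unfolding velocity_def by measurable

lemma phase_lipschitz:
  assumes "s \<ge> 0" "t \<ge> 0"
  shows "\<bar>phase s x - phase t x\<bar> \<le> \<bar>s - t\<bar> * (\<bar>snd x\<bar> + K)"
proof -
  have "norm (phase s x - phase t x) \<le> (\<bar>snd x\<bar> + K) * norm (s - t)"
    by (rule field_differentiable_bound[where S="{0..}" and f'="\<lambda>t. velocity t x"])
       (use assms phase_has_derivative velocity_bound in auto)
  then show ?thesis by (simp add: mult.commute)
qed

text \<open>Integrability of the integrands occurring in H and in its derivative; the
  dominating functions are |\<omega>| + K and (|\<omega>| + K)|\<omega>|, integrable by the second moment.\<close>

lemma integrable_velocity_dominant: "integrable M (\<lambda>x. \<bar>snd x\<bar> + K)"
  using integrable_abs_frequency by simp

lemma integrable_velocity_frequency_dominant: "integrable M (\<lambda>x. (\<bar>snd x\<bar> + K) * \<bar>snd x\<bar>)"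
proof -
  have expand: "(\<lambda>x. (\<bar>snd x\<bar> + K) * \<bar>snd x\<bar>) = (\<lambda>x. (snd x)\<^sup>2 + K * \<bar>snd x\<bar>)"
    by (auto simp: power2_eq_square algebra_simps)
  show ?thesis unfolding expand using integrable_abs_frequency second_moment by simp
qed

lemma integrable_bounded_times_velocity:
  assumes t: "t \<ge> 0" and [measurable]: "g \<in> borel_measurable M" and g: "\<And>x. \<bar>g x\<bar> \<le> 1"
  shows "integrable M (\<lambda>x. g x * velocity t x)"
proof (rule Bochner_Integration.integrable_bound[OF integrable_velocity_dominant])
  show "(\<lambda>x. g x * velocity t x) \<in> borel_measurable M" using t by measurable
  have "\<bar>g x\<bar> * \<bar>velocity t x\<bar> \<le> 1 * (\<bar>snd x\<bar> + K)" for x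
    using g velocity_bound[OF t] by (intro mult_mono) auto
  then show "AE x in M. norm (g x * velocity t x) \<le> norm (\<bar>snd x\<bar> + K)"
    using K_pos by (simp add: abs_mult)
qed

lemma integrable_velocity_frequency:
  assumes t: "t \<ge> 0" shows "integrable M (\<lambda>x. velocity t x * snd x)"
proof (rule Bochner_Integration.integrable_bound[OF integrable_velocity_frequency_dominant])
  show "(\<lambda>x. velocity t x * snd x) \<in> borel_measurable M" using t by measurable
  show "AE x in M. norm (velocity t x * snd x) \<le> norm ((\<bar>snd x\<bar> + K) * \<bar>snd x\<bar>)"
    using velocity_bound[OF t] K_pos by (auto simp: abs_mult intro!: mult_right_mono)
qed

text \<open>Since initial phases lie in [-\<pi>,\<pi>), |\<Theta>(t)| \<le> \<pi> + t(|\<omega>| + K) almost surely, so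
  \<Theta>(t) \<omega> is integrable.\<close>

lemma integrable_phase_frequency:
  assumes t: "t \<ge> 0" shows "integrable M (\<lambda>x. phase t x * snd x)"
proof (rule Bochner_Integration.integrable_bound)
  show "integrable M (\<lambda>x. pi * \<bar>snd x\<bar> + t * ((\<bar>snd x\<bar> + K) * \<bar>snd x\<bar>))"
    using integrable_abs_frequency integrable_velocity_frequency_dominant by simp
  show "(\<lambda>x. phase t x * snd x) \<in> borel_measurable M" using t by measurable
  show "AE x in M. norm (phase t x * snd x) \<le> norm (pi * \<bar>snd x\<bar> + t * ((\<bar>snd x\<bar> + K) * \<bar>snd x\<bar>))"
    using initial_support
  proof (rule AE_mp, intro AE_I2 impI)
    fix x :: "real \<times> real" assume x: "fst x \<in> {-pi..<pi}"
    have "\<bar>phase t x - phase 0 x\<bar> \<le> t * (\<bar>snd x\<bar> + K)"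
      using phase_lipschitz[of t 0] t by simp
    then have "\<bar>phase t x\<bar> \<le> pi + t * (\<bar>snd x\<bar> + K)"
      using x phase_initial[of x] by auto
    then have "\<bar>phase t x\<bar> * \<bar>snd x\<bar> \<le> (pi + t * (\<bar>snd x\<bar> + K)) * \<bar>snd x\<bar>"
      by (intro mult_right_mono) auto
    moreover have "0 \<le> pi * \<bar>snd x\<bar> + t * ((\<bar>snd x\<bar> + K) * \<bar>snd x\<bar>)"
      using t K_pos by (intro add_nonneg_nonneg mult_nonneg_nonneg) auto
    ultimately show "norm (phase t x * snd x) \<le> norm (pi * \<bar>snd x\<bar> + t * ((\<bar>snd x\<bar> + K) * \<bar>snd x\<bar>))"
      by (simp add: abs_mult algebra_simps)
  qed
qed

definition correlation :: "real \<Rightarrow> real" where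
  "correlation t = (\<integral>x. phase t x * snd x \<partial>M)"

definition cos_mean :: "real \<Rightarrow> real" where
  "cos_mean t = (\<integral>x. cos (phase t x) \<partial>M)"

definition sin_mean :: "real \<Rightarrow> real" where
  "sin_mean t = (\<integral>x. sin (phase t x) \<partial>M)"

lemma cos_sin_mean_polar:
  assumes t: "t \<ge> 0"
  shows "cos_mean t = R t * cos (\<phi> t)" and "sin_mean t = R t * sin (\<phi> t)"
proof -
  have "(cis :: real \<Rightarrow> complex) \<in> borel_measurable borel"
    by (intro borel_measurable_continuous_onI continuous_intros)
  then have cis_int: "integrable M (\<lambda>x. cis (phase t x))"
    by (intro integrable_const_bound[where B=1]) (use t in auto)
  have "R t * cos (\<phi> t) = Re (\<integral>x. cis (phase t x) \<partial>M)"
    using arg_cong[OF order_parameter_polar(2)[OF t], of Re] by simp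
  then show "cos_mean t = R t * cos (\<phi> t)"
    unfolding cos_mean_def using integral_Re[OF cis_int] by simp
  have "R t * sin (\<phi> t) = Im (\<integral>x. cis (phase t x) \<partial>M)"
    using arg_cong[OF order_parameter_polar(2)[OF t], of Im] by simp
  then show "sin_mean t = R t * sin (\<phi> t)"
    unfolding sin_mean_def using integral_Im[OF cis_int] by simp
qed

lemma order_parameter_squared:
  assumes "t \<ge> 0" shows "(R t)\<^sup>2 = (cos_mean t)\<^sup>2 + (sin_mean t)\<^sup>2"
  using cos_sin_mean_polar[OF assms] by (simp add: power_mult_distrib flip: distrib_left)

lemma kuramoto_H_eq:
  assumes "t \<ge> 0"
  shows "kuramoto_H K M \<Theta> R t = correlation t + K * ((cos_mean t)\<^sup>2 + (sin_mean t)\<^sup>2) / 2"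
  using order_parameter_squared[OF assms]
  by (simp add: kuramoto_H_def correlation_def phase_def)

lemma correlation_has_derivative:
  assumes t: "t \<ge> 0"
  shows "(correlation has_real_derivative (\<integral>x. velocity t x * snd x \<partial>M)) (at t within {0..})"
  unfolding correlation_def
proof (rule has_real_derivative_integral[where B="\<lambda>x. (\<bar>snd x\<bar> + K) * \<bar>snd x\<bar>"])
  show "((\<lambda>s. phase s x * snd x) has_real_derivative velocity t x * snd x) (at t within {0..})" for x
    by (rule DERIV_cmult_right[OF phase_has_derivative[OF t]])
  show "\<bar>phase s x * snd x - phase t x * snd x\<bar> \<le> \<bar>s - t\<bar> * ((\<bar>snd x\<bar> + K) * \<bar>snd x\<bar>)"
    if s: "s \<in> {0..}" for s x
  proof -
    have "\<bar>phase s x - phase t x\<bar> * \<bar>snd x\<bar> \<le> \<bar>s - t\<bar> * (\<bar>snd x\<bar> + K) * \<bar>snd x\<bar>"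
      using phase_lipschitz[of s t] s t by (intro mult_right_mono) auto
    then show ?thesis by (simp add: abs_mult left_diff_distrib[symmetric] mult.assoc)
  qed
qed (use t integrable_phase_frequency integrable_velocity_frequency_dominant in auto)

lemma cos_mean_has_derivative:
  assumes t: "t \<ge> 0"
  shows "(cos_mean has_real_derivative (\<integral>x. - sin (phase t x) * velocity t x \<partial>M)) (at t within {0..})"
  unfolding cos_mean_def
proof (rule has_real_derivative_integral[where B="\<lambda>x. \<bar>snd x\<bar> + K"])
  show "((\<lambda>s. cos (phase s x)) has_real_derivative - sin (phase t x) * velocity t x) (at t within {0..})" for x
    by (rule DERIV_chain2[OF DERIV_cos phase_has_derivative[OF t]])
  show "\<bar>cos (phase s x) - cos (phase t x)\<bar> \<le> \<bar>s - t\<bar> * (\<bar>snd x\<bar> + K)" if "s \<in> {0..}" for s x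
    using order_trans[OF abs_cos_diff_le phase_lipschitz] that t by auto
  show "integrable M (\<lambda>x. cos (phase s x))" if "s \<in> {0..}" for s
    by (rule integrable_const_bound[where B=1]) (use that in auto)
  show "(\<lambda>x. - sin (phase t x) * velocity t x) \<in> borel_measurable M" using t by measurable
qed (use t integrable_velocity_dominant in auto)

lemma sin_mean_has_derivative:
  assumes t: "t \<ge> 0"
  shows "(sin_mean has_real_derivative (\<integral>x. cos (phase t x) * velocity t x \<partial>M)) (at t within {0..})"
  unfolding sin_mean_def
proof (rule has_real_derivative_integral[where B="\<lambda>x. \<bar>snd x\<bar> + K"])
  show "((\<lambda>s. sin (phase s x)) has_real_derivative cos (phase t x) * velocity t x) (at t within {0..})" for x
    by (rule DERIV_chain2[OF DERIV_sin phase_has_derivative[OF t]])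
  show "\<bar>sin (phase s x) - sin (phase t x)\<bar> \<le> \<bar>s - t\<bar> * (\<bar>snd x\<bar> + K)" if "s \<in> {0..}" for s x
    using order_trans[OF abs_sin_diff_le phase_lipschitz] that t by auto
  show "integrable M (\<lambda>x. sin (phase s x))" if "s \<in> {0..}" for s
    by (rule integrable_const_bound[where B=1]) (use that in auto)
  show "(\<lambda>x. cos (phase t x) * velocity t x) \<in> borel_measurable M" using t by measurable
qed (use t integrable_velocity_dominant in auto)

text \<open>The coupling part of the derivative of R^2 / 2: with C = R cos \<phi> and S = R sin \<phi>,
  C C' + S S' = - R \<integral> sin(\<Theta> - \<phi>) v, by the subtraction formula for the sine.\<close>

lemma coupling_term:
  assumes t: "t \<ge> 0"
  shows "cos_mean t * (\<integral>x. - sin (phase t x) * velocity t x \<partial>M)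
       + sin_mean t * (\<integral>x. cos (phase t x) * velocity t x \<partial>M)
       = - R t * (\<integral>x. sin (phase t x - \<phi> t) * velocity t x \<partial>M)"
proof -
  have int_sin: "integrable M (\<lambda>x. - sin (phase t x) * velocity t x)"
    using integrable_bounded_times_velocity[OF t, of "\<lambda>x. - sin (phase t x)"] t by simp
  have int_cos: "integrable M (\<lambda>x. cos (phase t x) * velocity t x)"
    using integrable_bounded_times_velocity[OF t, of "\<lambda>x. cos (phase t x)"] t by simp
  have "cos_mean t * (\<integral>x. - sin (phase t x) * velocity t x \<partial>M)
       + sin_mean t * (\<integral>x. cos (phase t x) * velocity t x \<partial>M)
      = (\<integral>x. R t * cos (\<phi> t) * (- sin (phase t x) * velocity t x)
             + R t * sin (\<phi> t) * (cos (phase t x) * velocity t x) \<partial>M)"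
    using int_sin int_cos by (simp add: cos_sin_mean_polar[OF t])
  also have "\<dots> = (\<integral>x. - R t * (sin (phase t x - \<phi> t) * velocity t x) \<partial>M)"
    by (rule Bochner_Integration.integral_cong) (auto simp: sin_diff algebra_simps)
  also have "\<dots> = - R t * (\<integral>x. sin (phase t x - \<phi> t) * velocity t x \<partial>M)"
    by simp
  finally show ?thesis .
qed

text \<open>Dissipation identity: the derivative of H is the mean squared velocity.\<close>

lemma dissipation_identity:
  assumes t: "t \<ge> 0"
  shows "(\<integral>x. velocity t x * snd x \<partial>M)
       + K * (cos_mean t * (\<integral>x. - sin (phase t x) * velocity t x \<partial>M)
            + sin_mean t * (\<integral>x. cos (phase t x) * velocity t x \<partial>M))
       = (\<integral>x. (velocity t x)\<^sup>2 \<partial>M)"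
proof -
  have int_sin: "integrable M (\<lambda>x. sin (phase t x - \<phi> t) * velocity t x)"
    using integrable_bounded_times_velocity[OF t, of "\<lambda>x. sin (phase t x - \<phi> t)"] t by simp
  have "(\<integral>x. velocity t x * snd x \<partial>M) - K * R t * (\<integral>x. sin (phase t x - \<phi> t) * velocity t x \<partial>M)
      = (\<integral>x. velocity t x * snd x - K * R t * (sin (phase t x - \<phi> t) * velocity t x) \<partial>M)"
    using integrable_velocity_frequency[OF t] int_sin by simp
  also have "\<dots> = (\<integral>x. (velocity t x)\<^sup>2 \<partial>M)"
    by (rule Bochner_Integration.integral_cong)
       (simp_all add: power2_eq_square velocity_def[of t] algebra_simps)
  finally show ?thesis unfolding coupling_term[OF t] by (simp add: algebra_simps)
qed

lemma kuramoto_H_has_derivative: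
  assumes t: "t \<ge> 0"
  shows "(kuramoto_H K M \<Theta> R has_real_derivative (\<integral>x. (velocity t x)\<^sup>2 \<partial>M)) (at t within {0..})"
proof -
  have "((\<lambda>s. correlation s + K * ((cos_mean s)\<^sup>2 + (sin_mean s)\<^sup>2) / 2) has_real_derivative
      (\<integral>x. velocity t x * snd x \<partial>M)
      + K * (cos_mean t * (\<integral>x. - sin (phase t x) * velocity t x \<partial>M)
           + sin_mean t * (\<integral>x. cos (phase t x) * velocity t x \<partial>M))) (at t within {0..})"
    using correlation_has_derivative[OF t] cos_mean_has_derivative[OF t]
      sin_mean_has_derivative[OF t]
    by (auto intro!: derivative_eq_intros simp: field_simps)
  then have "((\<lambda>s. correlation s + K * ((cos_mean s)\<^sup>2 + (sin_mean s)\<^sup>2) / 2)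
      has_real_derivative (\<integral>x. (velocity t x)\<^sup>2 \<partial>M)) (at t within {0..})"
    by (simp only: dissipation_identity[OF t])
  then show ?thesis
    by (rule has_field_derivative_transform_within[where d=1]) (use t kuramoto_H_eq in auto)
qed

end

theorem mainTheorem8:
  fixes K :: real and M :: "(real \<times> real) measure"
    and \<Theta> :: "real \<Rightarrow> real \<Rightarrow> real \<Rightarrow> real" and R \<phi> :: "real \<Rightarrow> real"
  assumes "prob_space M"
    and "sets M = sets borel"
    and "AE x in M. fst x \<in> {-pi..<pi}"
    and "K > 0"
    and "integrable M (\<lambda>x. (snd x)\<^sup>2)"
    and "kuramoto_solution K M \<Theta> R \<phi>"
  shows "mono_on {0..} (kuramoto_H K M \<Theta> R)"
proof -
  interpret kinetic_kuramoto M K \<Theta> R \<phi>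
    using assms by (simp add: kinetic_kuramoto_def kinetic_kuramoto_axioms_def)
  show ?thesis
    by (rule mono_on_atLeast_if_derivative_nonneg[OF kuramoto_H_has_derivative])
       (simp_all add: integral_nonneg_AE)
qed

end
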